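(* Let $\mathfrak{A}$ be an atomic weakly associative relation algebra. Let $B=\{s\in{}^3\mathrm{At}(\mathfrak{A}): s_2;s_0\ge s_1\}$ and, for $\{\kappa,\lambda,\mu\}=\{0,1,2\}$, let $T_\kappa=\{\langle s,t\rangle\in B\times B:s_\kappa=t_\kappa\}$, $E_{\kappa\kappa}=B$, and $E_{\kappa\lambda}=E_{\lambda\kappa}=\{s\in B:s_\mu\le1'\}$. Then $\mathfrak{B}=\langle B,T_\kappa,E_{\kappa\lambda}\rangle_{\kappa,\lambda<3}$ is a suitable structure.
   Context: WA: algebras $\langle A,+,\overline{\phantom{x}},;,\breve{\phantom{x}},1'\rangle$ with $x\cdot y=\overline{\overline{x}+\overline{y}}$, $0'=\overline{1'}$, $1=1'+0'$, $0=\overline{1}$, satisfying for all $x,y,z$: $x+y=y+x$; $x+(y+z)=(x+y)+z$; $\overline{\overline{x}+\overline{y}}+\overline{\overline{x}+y}=x$; $((x\cdot 1');1);1=(x\cdot1');1$; $(x+y);z=x;z+y;z$; $x;1'=x$; $\breve{\breve{x}}=x$; $\breve{(x+y)}=\breve{x}+\breve{y}$; $\breve{(x;y)}=\breve{y};\breve{x}$; $\breve{x};\overline{x;y}+\overline{y}=\overline{y}$. $\mathrm{At}(\mathfrak{A})$ = set of atoms; triples are $s=\langle s_0,s_1,s_2\rangle$. A structure $\langle B,T_\kappa,E_{\kappa\lambda}\rangle_{\kappa,\lambda<\alpha}$ ($\alpha$ a nonzero ordinal) is a suitable structure if for all $\kappa,\lambda,\mu<\alpha$: (i) $T_\kappa\subseteq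 B\times B$ and $E_{\kappa\lambda}\subseteq B$; (ii) $T_\kappa$ is an equivalence relation on $B$; (iii) $E_{\kappa\kappa}=B$; (iv) $E_{\kappa\lambda}=T_\mu^*(E_{\kappa\mu}\cap E_{\mu\lambda})$ whenever $\kappa\ne\mu\ne\lambda$, where $T_\mu^*(X)=\{y:\exists x\in X\ \langle y,x\rangle\in T_\mu\}$; (v) $T_\kappa\cap(E_{\kappa\lambda}\times E_{\kappa\lambda})\subseteq Id$ (the identity relation) whenever $\kappa\ne\lambda$. *)

theory Defs
  imports Main
begin

text \<open>An algebra (A, +, -, ;, converse, 1') is given by its operations on a type 'a
  (the carrier is the whole type).  p = join, c = complement, r = relative product,
  v = converse, e = identity element 1'.\<close>

definition wa_meet :: "('a\<Rightarrow>'a\<Rightarrow>'a) \<Rightarrow> ('a\<Rightarrow>'a) \<Rightarrow> 'a \<Rightarrow> 'a \<Rightarrow> 'a" where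
  "wa_meet p c x y = c (p (c x) (c y))"

definition wa_diversity :: "('a\<Rightarrow>'a) \<Rightarrow> 'a \<Rightarrow> 'a" where
  "wa_diversity c e = c e"

definition wa_top :: "('a\<Rightarrow>'a\<Rightarrow>'a) \<Rightarrow> ('a\<Rightarrow>'a) \<Rightarrow> 'a \<Rightarrow> 'a" where
  "wa_top p c e = p e (wa_diversity c e)"

definition wa_zero :: "('a\<Rightarrow>'a\<Rightarrow>'a) \<Rightarrow> ('a\<Rightarrow>'a) \<Rightarrow> 'a \<Rightarrow> 'a" where
  "wa_zero p c e = c (wa_top p c e)"

definition wa_leq :: "('a\<Rightarrow>'a\<Rightarrow>'a) \<Rightarrow> 'a \<Rightarrow> 'a \<Rightarrow> bool" where
  "wa_leq p x y \<longleftrightarrow> p x y = y"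

definition WA :: "('a\<Rightarrow>'a\<Rightarrow>'a) \<Rightarrow> ('a\<Rightarrow>'a) \<Rightarrow> ('a\<Rightarrow>'a\<Rightarrow>'a) \<Rightarrow> ('a\<Rightarrow>'a) \<Rightarrow> 'a \<Rightarrow> bool" where
  "WA p c r v e \<longleftrightarrow>
     (\<forall>x y. p x y = p y x) \<and>
     (\<forall>x y z. p x (p y z) = p (p x y) z) \<and>
     (\<forall>x y. p (c (p (c x) (c y))) (c (p (c x) y)) = x) \<and>
     (\<forall>x. r (r (wa_meet p c x e) (wa_top p c e)) (wa_top p c e)
            = r (wa_meet p c x e) (wa_top p c e)) \<and>
     (\<forall>x y z. r (p x y) z = p (r x z) (r y z)) \<and>
     (\<forall>x. r x e = x) \<and>
     (\<forall>x. v (v x) = x) \<and>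
     (\<forall>x y. v (p x y) = p (v x) (v y)) \<and>
     (\<forall>x y. v (r x y) = r (v y) (v x)) \<and>
     (\<forall>x y. p (r (v x) (c (r x y))) (c y) = c y)"

definition wa_atom :: "('a\<Rightarrow>'a\<Rightarrow>'a) \<Rightarrow> ('a\<Rightarrow>'a) \<Rightarrow> 'a \<Rightarrow> 'a \<Rightarrow> bool" where
  "wa_atom p c e a \<longleftrightarrow> a \<noteq> wa_zero p c e \<and>
     (\<forall>y. wa_leq p y a \<longrightarrow> y = wa_zero p c e \<or> y = a)"

definition wa_atoms :: "('a\<Rightarrow>'a\<Rightarrow>'a) \<Rightarrow> ('a\<Rightarrow>'a) \<Rightarrow> 'a \<Rightarrow> 'a set" where
  "wa_atoms p c e = {a. wa_atom p c e a}"

definition wa_atomic :: "('a\<Rightarrow>'a\<Rightarrow>'a) \<Rightarrow> ('a\<Rightarrow>'a) \<Rightarrow> 'a \<Rightarrow> bool" where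
  "wa_atomic p c e \<longleftrightarrow>
     (\<forall>x. x \<noteq> wa_zero p c e \<longrightarrow> (\<exists>a. wa_atom p c e a \<and> wa_leq p a x))"

definition proj :: "nat \<Rightarrow> 'a \<times> 'a \<times> 'a \<Rightarrow> 'a" where
  "proj i s = (if i = 0 then fst s else if i = 1 then fst (snd s) else snd (snd s))"

definition wa_B :: "('a\<Rightarrow>'a\<Rightarrow>'a) \<Rightarrow> ('a\<Rightarrow>'a) \<Rightarrow> ('a\<Rightarrow>'a\<Rightarrow>'a) \<Rightarrow> 'a \<Rightarrow> ('a \<times> 'a \<times> 'a) set" where
  "wa_B p c r e = {s. proj 0 s \<in> wa_atoms p c e \<and> proj 1 s \<in> wa_atoms p c e \<and>
      proj 2 s \<in> wa_atoms p c e \<and> wa_leq p (proj 1 s) (r (proj 2 s) (proj 0 s))}"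

definition wa_T :: "('a\<Rightarrow>'a\<Rightarrow>'a) \<Rightarrow> ('a\<Rightarrow>'a) \<Rightarrow> ('a\<Rightarrow>'a\<Rightarrow>'a) \<Rightarrow> 'a \<Rightarrow> nat
    \<Rightarrow> (('a \<times> 'a \<times> 'a) \<times> ('a \<times> 'a \<times> 'a)) set" where
  "wa_T p c r e k = {(s, t). s \<in> wa_B p c r e \<and> t \<in> wa_B p c r e \<and> proj k s = proj k t}"

text \<open>For k \<noteq> l in {0,1,2}, the third index m is 3 - k - l.\<close>
definition wa_E :: "('a\<Rightarrow>'a\<Rightarrow>'a) \<Rightarrow> ('a\<Rightarrow>'a) \<Rightarrow> ('a\<Rightarrow>'a\<Rightarrow>'a) \<Rightarrow> 'a \<Rightarrow> nat \<Rightarrow> nat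
    \<Rightarrow> ('a \<times> 'a \<times> 'a) set" where
  "wa_E p c r e k l = (if k = l then wa_B p c r e
      else {s \<in> wa_B p c r e. wa_leq p (proj (3 - k - l) s) e})"

definition Tstar :: "('b \<times> 'b) set \<Rightarrow> 'b set \<Rightarrow> 'b set" where
  "Tstar R X = {y. \<exists>x\<in>X. (y, x) \<in> R}"

text \<open>Suitable structures, for a nonzero (here finite) ordinal \<alpha>.\<close>
definition suitable :: "nat \<Rightarrow> 'b set \<Rightarrow> (nat \<Rightarrow> ('b \<times> 'b) set) \<Rightarrow> (nat \<Rightarrow> nat \<Rightarrow> 'b set) \<Rightarrow> bool" where
  "suitable \<alpha> B T E \<longleftrightarrow> 0 < \<alpha> \<and>
     (\<forall>k<\<alpha>. \<forall>l<\<alpha>. T k \<subseteq> B \<times> B \<and> E k l \<subseteq> B) \<and>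
     (\<forall>k<\<alpha>. equiv B (T k)) \<and>
     (\<forall>k<\<alpha>. E k k = B) \<and>
     (\<forall>k<\<alpha>. \<forall>l<\<alpha>. \<forall>m<\<alpha>. k \<noteq> m \<and> m \<noteq> l \<longrightarrow>
        E k l = Tstar (T m) (E k m \<inter> E m l)) \<and>
     (\<forall>k<\<alpha>. \<forall>l<\<alpha>. k \<noteq> l \<longrightarrow> T k \<inter> (E k l \<times> E k l) \<subseteq> Id)"

end

theory Submission
  imports Defs
begin

(*
  A triple of B with an identity atom in one position is determined by either of
  its other two components. An identity atom d satisfies d ; a <= a and a ; d <= a,
  so by the cycle laws such a triple must be (a, a, l a), (r b, b, b) or
  (a, r a, a~), where the left unit l a and the right unit r a are the identity
  atoms with a <= l a ; a and a <= a ; r a. Atomicity provides them, and weak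
  associativity makes them unique. Condition (v) is exactly this injectivity;
  condition (iv) follows from it, from the existence of such triples over every
  atom, and from the fact that a triple with two identity components is (d, d, d).
*)

locale huntington_algebra =
  fixes join :: "'a \<Rightarrow> 'a \<Rightarrow> 'a" (infixl "\<oplus>" 65) and compl :: "'a \<Rightarrow> 'a"
  assumes join_commute: "x \<oplus> y = y \<oplus> x"
    and join_assoc: "x \<oplus> (y \<oplus> z) = (x \<oplus> y) \<oplus> z"
    and huntington: "compl (compl x \<oplus> compl y) \<oplus> compl (compl x \<oplus> y) = x"
begin

abbreviation leq :: "'a \<Rightarrow> 'a \<Rightarrow> bool" (infix "\<preceq>" 50)
  where "x \<preceq> y \<equiv> wa_leq (\<oplus>) x y"

abbreviation meet :: "'a \<Rightarrow> 'a \<Rightarrow> 'a" (infixl "\<cdot>" 70)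
  where "x \<cdot> y \<equiv> wa_meet (\<oplus>) compl x y"

lemma join_left_commute: "x \<oplus> (y \<oplus> z) = y \<oplus> (x \<oplus> z)"
  by (metis join_assoc join_commute)

lemma compl_compl [simp]: "compl (compl x) = x"
  by (smt (verit) huntington join_commute join_left_commute)

lemma join_compl_const: "x \<oplus> compl x = y \<oplus> compl y"
  by (smt (verit) compl_compl huntington join_assoc join_commute)

lemma join_compl_bot: "x \<oplus> compl (y \<oplus> compl y) = x"
  by (smt (verit) compl_compl huntington join_assoc join_compl_const)

lemma join_idem: "x \<oplus> x = x"
  by (metis compl_compl huntington join_compl_bot join_commute)

lemma leq_refl: "x \<preceq> x"
  unfolding wa_leq_def by (rule join_idem)

lemma leq_antisym: "x \<preceq> y \<Longrightarrow> y \<preceq> x \<Longrightarrow> x = y"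
  unfolding wa_leq_def by (metis join_commute)

lemma leq_trans [trans]: "x \<preceq> y \<Longrightarrow> y \<preceq> z \<Longrightarrow> x \<preceq> z"
  unfolding wa_leq_def by (metis join_assoc)

lemma join_upper1: "x \<preceq> x \<oplus> y"
  unfolding wa_leq_def by (metis join_assoc join_idem)

lemma join_upper2: "y \<preceq> x \<oplus> y"
  unfolding wa_leq_def by (metis join_left_commute join_idem)

lemma join_least: "x \<preceq> z \<Longrightarrow> y \<preceq> z \<Longrightarrow> x \<oplus> y \<preceq> z"
  unfolding wa_leq_def by (metis join_assoc)

lemma bot_least: "compl (y \<oplus> compl y) \<preceq> x"
  unfolding wa_leq_def by (metis join_commute join_compl_bot)

lemma top_greatest: "x \<preceq> y \<oplus> compl y"
  unfolding wa_leq_def by (metis join_assoc join_idem join_compl_const)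

lemma compl_antimono:
  assumes "x \<preceq> y"
  shows "compl y \<preceq> compl x"
proof -
  have "compl (x \<oplus> compl y) \<oplus> compl (x \<oplus> y) = compl x"
    using huntington[of "compl x" y] by simp
  then show ?thesis
    using assms join_upper2 unfolding wa_leq_def by metis
qed

lemma meet_lower1: "x \<cdot> y \<preceq> x"
  unfolding wa_meet_def using compl_antimono[OF join_upper1] by (metis compl_compl)

lemma meet_lower2: "x \<cdot> y \<preceq> y"
  unfolding wa_meet_def using compl_antimono[OF join_upper2] by (metis compl_compl)

lemma meet_greatest: "z \<preceq> x \<Longrightarrow> z \<preceq> y \<Longrightarrow> z \<preceq> x \<cdot> y"
  unfolding wa_meet_def by (metis compl_antimono compl_compl join_least)

lemma meet_commute: "x \<cdot> y = y \<cdot> x"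
  unfolding wa_meet_def by (metis join_commute)

lemma meet_absorb: "x \<preceq> y \<Longrightarrow> x \<cdot> y = x"
  by (meson leq_antisym leq_refl meet_greatest meet_lower1)

lemma meet_mono: "x \<preceq> x' \<Longrightarrow> y \<preceq> y' \<Longrightarrow> x \<cdot> y \<preceq> x' \<cdot> y'"
  by (meson leq_trans meet_greatest meet_lower1 meet_lower2)

lemma meet_eq_bot_iff: "x \<cdot> y = compl (u \<oplus> compl u) \<longleftrightarrow> x \<preceq> compl y"
proof
  assume "x \<cdot> y = compl (u \<oplus> compl u)"
  moreover have "x \<cdot> y \<oplus> x \<cdot> compl y = x"
    using huntington[of x y] unfolding wa_meet_def by simp
  ultimately have "x = x \<cdot> compl y"
    by (metis join_commute join_compl_bot)
  then show "x \<preceq> compl y"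
    by (metis meet_lower2)
next
  assume "x \<preceq> compl y"
  then have "x \<cdot> y \<preceq> compl y \<cdot> y"
    by (simp add: meet_mono leq_refl)
  also have "compl y \<cdot> y = compl (u \<oplus> compl u)"
    unfolding wa_meet_def by (metis compl_compl join_commute join_compl_const)
  finally show "x \<cdot> y = compl (u \<oplus> compl u)"
    using bot_least leq_antisym by blast
qed

end

locale wa_algebra = huntington_algebra +
  fixes comp :: "'a \<Rightarrow> 'a \<Rightarrow> 'a" (infixl "\<odot>" 70)
    and conv :: "'a \<Rightarrow> 'a" ("_\<^sup>\<smile>" [1000] 1000)
    and e :: 'a
  assumes weak_assoc: "(x \<cdot> e \<odot> wa_top (\<oplus>) compl e) \<odot> wa_top (\<oplus>) compl e
      = x \<cdot> e \<odot> wa_top (\<oplus>) compl e"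
    and comp_join_distrib: "(x \<oplus> y) \<odot> z = x \<odot> z \<oplus> y \<odot> z"
    and comp_ident [simp]: "x \<odot> e = x"
    and conv_conv [simp]: "x\<^sup>\<smile>\<^sup>\<smile> = x"
    and conv_join: "(x \<oplus> y)\<^sup>\<smile> = x\<^sup>\<smile> \<oplus> y\<^sup>\<smile>"
    and conv_comp: "(x \<odot> y)\<^sup>\<smile> = y\<^sup>\<smile> \<odot> x\<^sup>\<smile>"
    and schroeder_axiom: "x\<^sup>\<smile> \<odot> compl (x \<odot> y) \<oplus> compl y = compl y"
begin

abbreviation bottom ("\<zero>") where "\<zero> \<equiv> wa_zero (\<oplus>) compl e"
abbreviation full ("\<one>") where "\<one> \<equiv> wa_top (\<oplus>) compl e"
abbreviation atom where "atom \<equiv> wa_atom (\<oplus>) compl e"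
abbreviation ident_atom where "ident_atom d \<equiv> atom d \<and> d \<preceq> e"

lemma bottom_eq: "\<zero> = compl (e \<oplus> compl e)"
  unfolding wa_zero_def wa_top_def wa_diversity_def ..

lemma bottom_least: "\<zero> \<preceq> x"
  unfolding bottom_eq by (rule bot_least)

lemma leq_bottom_iff: "x \<preceq> \<zero> \<longleftrightarrow> x = \<zero>"
  using bottom_least leq_antisym leq_refl by blast

lemma full_greatest: "x \<preceq> \<one>"
  unfolding wa_top_def wa_diversity_def by (rule top_greatest)

lemma meet_eq_bottom_iff: "x \<cdot> y = \<zero> \<longleftrightarrow> x \<preceq> compl y"
  unfolding bottom_eq by (rule meet_eq_bot_iff)

lemma conv_inject [simp]: "x\<^sup>\<smile> = y\<^sup>\<smile> \<longleftrightarrow> x = y"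
  by (metis conv_conv)

lemma comp_join_distrib_left: "z \<odot> (x \<oplus> y) = z \<odot> x \<oplus> z \<odot> y"
  by (metis conv_inject conv_comp conv_join comp_join_distrib)

lemma comp_mono_left: "x \<preceq> y \<Longrightarrow> x \<odot> z \<preceq> y \<odot> z"
  unfolding wa_leq_def by (metis comp_join_distrib)

lemma comp_mono_right: "x \<preceq> y \<Longrightarrow> z \<odot> x \<preceq> z \<odot> y"
  unfolding wa_leq_def by (metis comp_join_distrib_left)

lemma comp_mono: "x \<preceq> x' \<Longrightarrow> y \<preceq> y' \<Longrightarrow> x \<odot> y \<preceq> x' \<odot> y'"
  by (meson leq_trans comp_mono_left comp_mono_right)

lemma conv_leq_iff [simp]: "x\<^sup>\<smile> \<preceq> y\<^sup>\<smile> \<longleftrightarrow> x \<preceq> y"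
  unfolding wa_leq_def by (metis conv_inject conv_join)

lemma conv_ident [simp]: "e\<^sup>\<smile> = e"
  by (metis comp_ident conv_comp conv_conv)

lemma conv_leq_ident_iff [simp]: "x\<^sup>\<smile> \<preceq> e \<longleftrightarrow> x \<preceq> e"
  by (metis conv_ident conv_leq_iff)

lemma ident_comp [simp]: "e \<odot> x = x"
  by (metis comp_ident conv_comp conv_conv conv_ident)

lemma comp_leq_left_if_ident: "d \<preceq> e \<Longrightarrow> x \<odot> d \<preceq> x"
  using comp_mono_right by fastforce

lemma comp_leq_right_if_ident: "d \<preceq> e \<Longrightarrow> d \<odot> x \<preceq> x"
  using comp_mono_left by fastforce

lemma conv_bottom [simp]: "\<zero>\<^sup>\<smile> = \<zero>"
  by (metis bottom_least conv_conv conv_leq_iff leq_bottom_iff)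

lemma conv_meet_leq: "(x \<cdot> y)\<^sup>\<smile> \<preceq> x\<^sup>\<smile> \<cdot> y\<^sup>\<smile>"
  by (metis conv_leq_iff meet_greatest meet_lower1 meet_lower2)

lemma schroeder: "(x \<odot> y) \<cdot> z = \<zero> \<Longrightarrow> (x\<^sup>\<smile> \<odot> z) \<cdot> y = \<zero>"
proof -
  assume "(x \<odot> y) \<cdot> z = \<zero>"
  then have "z \<preceq> compl (x \<odot> y)"
    by (metis meet_commute meet_eq_bottom_iff)
  then have "x\<^sup>\<smile> \<odot> z \<preceq> x\<^sup>\<smile> \<odot> compl (x \<odot> y)"
    by (rule comp_mono_right)
  also have "\<dots> \<preceq> compl y"
    unfolding wa_leq_def by (rule schroeder_axiom)
  finally show ?thesis
    by (simp add: meet_eq_bottom_iff)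
qed

(* The rotations of triangles below are the cycle laws of relation algebras. *)
abbreviation triangle :: "'a \<Rightarrow> 'a \<Rightarrow> 'a \<Rightarrow> bool"
  where "triangle x y z \<equiv> (x \<odot> y) \<cdot> z \<noteq> \<zero>"

lemma triangle_conv_left: "triangle x y z \<Longrightarrow> triangle (x\<^sup>\<smile>) z y"
  using schroeder[of "x\<^sup>\<smile>" z y] by auto

lemma triangle_conv: "triangle x y z \<Longrightarrow> triangle (y\<^sup>\<smile>) (x\<^sup>\<smile>) (z\<^sup>\<smile>)"
  by (metis conv_bottom conv_comp conv_inject conv_meet_leq leq_bottom_iff)

lemma triangle_rotate: "triangle x y z \<Longrightarrow> triangle z (y\<^sup>\<smile>) x"
  by (metis conv_conv triangle_conv triangle_conv_left)

lemma atom_nonzero: "atom a \<Longrightarrow> a \<noteq> \<zero>"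
  unfolding wa_atom_def by blast

lemma atom_eqI: "atom a \<Longrightarrow> b \<preceq> a \<Longrightarrow> b \<noteq> \<zero> \<Longrightarrow> b = a"
  unfolding wa_atom_def by blast

lemma atom_leq_iff: "atom a \<Longrightarrow> a \<preceq> x \<longleftrightarrow> x \<cdot> a \<noteq> \<zero>"
  by (metis atom_eqI atom_nonzero meet_absorb meet_commute meet_lower1)

lemma atoms_eqI: "atom a \<Longrightarrow> atom b \<Longrightarrow> a \<cdot> b \<noteq> \<zero> \<Longrightarrow> a = b"
  by (metis atom_eqI meet_commute meet_lower1)

lemma atom_conv: "atom a \<Longrightarrow> atom (a\<^sup>\<smile>)"
  unfolding wa_atom_def by (metis conv_bottom conv_conv conv_inject conv_leq_iff)

lemma atom_leq_comp_conv_left: "atom a \<Longrightarrow> atom b \<Longrightarrow> b \<preceq> d \<odot> a \<Longrightarrow> a \<preceq> d\<^sup>\<smile> \<odot> b"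
  using atom_leq_iff triangle_conv_left by blast

lemma atom_leq_comp_rotate: "atom b \<Longrightarrow> atom d \<Longrightarrow> b \<preceq> d \<odot> a \<Longrightarrow> d \<preceq> b \<odot> a\<^sup>\<smile>"
  using atom_leq_iff triangle_rotate by blast

lemma atom_eq_if_leq_ident_comp: "d \<preceq> e \<Longrightarrow> atom a \<Longrightarrow> atom b \<Longrightarrow> b \<preceq> d \<odot> a \<Longrightarrow> b = a"
  by (metis atom_eqI atom_nonzero comp_leq_right_if_ident leq_trans)

lemma atom_eq_if_leq_comp_ident: "d \<preceq> e \<Longrightarrow> atom a \<Longrightarrow> atom b \<Longrightarrow> b \<preceq> a \<odot> d \<Longrightarrow> b = a"
  by (metis atom_eqI atom_nonzero comp_leq_left_if_ident leq_trans)

end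

locale atomic_wa_algebra = wa_algebra +
  assumes atomic: "wa_atomic (\<oplus>) compl e"
begin

lemma atom_below: "x \<noteq> \<zero> \<Longrightarrow> \<exists>a. atom a \<and> a \<preceq> x"
  using atomic unfolding wa_atomic_def by blast

lemma left_unit_exists: "atom a \<Longrightarrow> \<exists>d. ident_atom d \<and> a \<preceq> d \<odot> a"
proof -
  assume a: "atom a"
  then have "triangle e a a"
    by (simp add: atom_nonzero meet_absorb leq_refl)
  then have "triangle a (a\<^sup>\<smile>) e"
    by (metis triangle_rotate)
  then obtain d where "atom d" and d: "d \<preceq> (a \<odot> a\<^sup>\<smile>) \<cdot> e"
    using atom_below by blast
  moreover have "d \<preceq> e" and "d \<preceq> a \<odot> a\<^sup>\<smile>"
    using d meet_lower1 meet_lower2 leq_trans by blast+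
  ultimately show ?thesis
    using a atom_leq_comp_rotate[of d a "a\<^sup>\<smile>"] by auto
qed

lemma ident_atom_leq_comp_self:
  assumes d: "ident_atom d"
  shows "d \<preceq> d \<odot> d"
proof -
  obtain f where f: "ident_atom f" "d \<preceq> f \<odot> d"
    using left_unit_exists d by blast
  then have "d \<preceq> f"
    using d comp_leq_left_if_ident leq_trans by blast
  then have "d = f"
    using atom_eqI atom_nonzero d f(1) by blast
  with f show ?thesis
    by simp
qed

lemma conv_ident_atom:
  assumes d: "ident_atom d"
  shows "d\<^sup>\<smile> = d"
proof -
  have "d \<preceq> d\<^sup>\<smile> \<odot> d"
    using atom_leq_comp_conv_left d ident_atom_leq_comp_self by blast
  also have "\<dots> \<preceq> d\<^sup>\<smile>"
    using comp_leq_left_if_ident d by blast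
  finally show ?thesis
    using atom_eqI atom_conv atom_nonzero d by metis
qed

lemma left_unit_unique:
  assumes d: "ident_atom d" and d': "ident_atom d'" and "atom a"
    and "a \<preceq> d \<odot> a" and "a \<preceq> d' \<odot> a"
  shows "d = d'"
proof -
  have "a \<preceq> d \<odot> \<one>"
    using \<open>a \<preceq> d \<odot> a\<close> comp_mono_right full_greatest leq_trans by blast
  have "d' \<preceq> a \<odot> a\<^sup>\<smile>"
    using atom_leq_comp_rotate \<open>atom a\<close> d' \<open>a \<preceq> d' \<odot> a\<close> by blast
  also have "\<dots> \<preceq> (d \<odot> \<one>) \<odot> \<one>"
    using \<open>a \<preceq> d \<odot> \<one>\<close> comp_mono full_greatest by blast
  also have "\<dots> = d \<odot> \<one>"
    using weak_assoc[of d] d meet_absorb by simp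
  finally have "triangle d \<one> d'"
    using atom_leq_iff d' by blast
  then have "triangle d d' \<one>"
    using triangle_conv_left conv_ident_atom[OF d] by fastforce
  then have "d \<odot> d' \<noteq> \<zero>"
    by (simp add: full_greatest meet_absorb)
  moreover have "d \<odot> d' \<preceq> d \<cdot> d'"
    using d d' comp_leq_left_if_ident comp_leq_right_if_ident meet_greatest by blast
  ultimately show ?thesis
    by (metis atoms_eqI d d' leq_bottom_iff)
qed

definition left_unit :: "'a \<Rightarrow> 'a"
  where "left_unit a = (THE d. ident_atom d \<and> a \<preceq> d \<odot> a)"

definition right_unit :: "'a \<Rightarrow> 'a"
  where "right_unit a = left_unit (a\<^sup>\<smile>)"

lemma left_unit: "atom a \<Longrightarrow> ident_atom (left_unit a) \<and> a \<preceq> left_unit a \<odot> a"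
  unfolding left_unit_def by (rule theI') (use left_unit_exists left_unit_unique in blast)

lemma left_unit_eqI: "atom a \<Longrightarrow> ident_atom d \<Longrightarrow> a \<preceq> d \<odot> a \<Longrightarrow> left_unit a = d"
  using left_unit left_unit_unique by blast

lemma left_unit_ident_atom: "ident_atom d \<Longrightarrow> left_unit d = d"
  by (simp add: ident_atom_leq_comp_self left_unit_eqI)

lemma leq_comp_ident_atom_iff: "ident_atom d \<Longrightarrow> a \<preceq> a \<odot> d \<longleftrightarrow> a\<^sup>\<smile> \<preceq> d \<odot> a\<^sup>\<smile>"
  by (metis conv_comp conv_ident_atom conv_leq_iff)

lemma right_unit: "atom a \<Longrightarrow> ident_atom (right_unit a) \<and> a \<preceq> a \<odot> right_unit a"
  unfolding right_unit_def using left_unit atom_conv leq_comp_ident_atom_iff by blast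

lemma right_unit_eqI: "atom a \<Longrightarrow> ident_atom d \<Longrightarrow> a \<preceq> a \<odot> d \<Longrightarrow> right_unit a = d"
  unfolding right_unit_def using left_unit_eqI atom_conv leq_comp_ident_atom_iff by blast

abbreviation B where "B \<equiv> wa_B (\<oplus>) compl (\<odot>) e"

lemma proj_simps [simp]: "proj 0 (a, b, d) = a" "proj (Suc 0) (a, b, d) = b" "proj 2 (a, b, d) = d"
  by (simp_all add: proj_def)

lemma proj_diag [simp]: "proj i (d, d, d) = d"
  by (simp add: proj_def)

lemma mem_B_iff: "(a, b, d) \<in> B \<longleftrightarrow> atom a \<and> atom b \<and> atom d \<and> b \<preceq> d \<odot> a"
  by (simp add: wa_B_def wa_atoms_def)

lemma mem_B_ident_2: "d \<preceq> e \<Longrightarrow> (a, b, d) \<in> B \<longleftrightarrow> atom a \<and> b = a \<and> d = left_unit a"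
  by (metis atom_eq_if_leq_ident_comp left_unit left_unit_eqI mem_B_iff)

lemma mem_B_ident_0: "a \<preceq> e \<Longrightarrow> (a, b, d) \<in> B \<longleftrightarrow> atom b \<and> d = b \<and> a = right_unit b"
  by (metis atom_eq_if_leq_comp_ident right_unit right_unit_eqI mem_B_iff)

lemma mem_B_ident_1: "b \<preceq> e \<Longrightarrow> (a, b, d) \<in> B \<longleftrightarrow> atom a \<and> d = a\<^sup>\<smile> \<and> b = right_unit a"
proof
  assume "b \<preceq> e" and "(a, b, d) \<in> B"
  then have "atom a" "atom b" "atom d" "b \<preceq> d \<odot> a"
    by (simp_all add: mem_B_iff)
  then have "d = a\<^sup>\<smile>"
    using atom_leq_comp_rotate atom_eq_if_leq_ident_comp atom_conv \<open>b \<preceq> e\<close> by blast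
  moreover have "a \<preceq> a \<odot> b"
    using atom_leq_comp_conv_left \<open>atom a\<close> \<open>atom b\<close> \<open>b \<preceq> d \<odot> a\<close> calculation by fastforce
  ultimately show "atom a \<and> d = a\<^sup>\<smile> \<and> b = right_unit a"
    using right_unit_eqI \<open>atom a\<close> \<open>atom b\<close> \<open>b \<preceq> e\<close> by blast
next
  assume "atom a \<and> d = a\<^sup>\<smile> \<and> b = right_unit a"
  then show "(a, b, d) \<in> B"
    using right_unit atom_leq_comp_conv_left atom_conv mem_B_iff by metis
qed

lemma ident_triple_mem_B: "ident_atom d \<Longrightarrow> (d, d, d) \<in> B"
  by (simp add: mem_B_ident_2 left_unit_ident_atom)

lemma less_3_iff: "(k::nat) < 3 \<longleftrightarrow> k = 0 \<or> k = 1 \<or> k = 2"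
  by auto

lemma proj_atom: "s \<in> B \<Longrightarrow> atom (proj m s)"
  by (cases s) (auto simp: mem_B_iff proj_def)

lemma inj_on_proj_ident_at:
  assumes "k < 3" and "m < 3" and "k \<noteq> m"
  shows "inj_on (proj k) {s \<in> B. proj m s \<preceq> e}"
proof (rule inj_onI)
  fix s t
  assume "s \<in> {s \<in> B. proj m s \<preceq> e}" "t \<in> {s \<in> B. proj m s \<preceq> e}" "proj k s = proj k t"
  then show "s = t"
    using assms
    by (cases s; cases t) (auto simp: less_3_iff mem_B_ident_0 mem_B_ident_1 mem_B_ident_2)
qed

lemma ident_at_all_if_ident_at_two:
  assumes "s \<in> B" and "k < 3" and "l < 3" and "k \<noteq> l" and "proj k s \<preceq> e" and "proj l s \<preceq> e"
  shows "proj m s \<preceq> e"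
  using assms left_unit right_unit
  by (cases s) (auto simp: less_3_iff proj_def mem_B_ident_0 mem_B_ident_1 mem_B_ident_2)

lemma ex_ident_at_with_proj:
  assumes "k < 3" and "m < 3" and "k \<noteq> m" and "atom x"
  shows "\<exists>t\<in>B. proj k t = x \<and> proj m t \<preceq> e"
proof -
  have units: "left_unit x \<preceq> e" "right_unit x \<preceq> e" "right_unit (x\<^sup>\<smile>) \<preceq> e"
    using assms(4) atom_conv left_unit right_unit by blast+
  have "(x, x, left_unit x) \<in> B" "(right_unit x, x, x) \<in> B"
    "(x, right_unit x, x\<^sup>\<smile>) \<in> B" "(x\<^sup>\<smile>, right_unit (x\<^sup>\<smile>), x) \<in> B"
    using assms(4) atom_conv units by (simp_all add: mem_B_ident_0 mem_B_ident_1 mem_B_ident_2)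
  then show ?thesis
    using assms(1-3) units by (auto simp: less_3_iff) force+
qed

abbreviation T where "T \<equiv> wa_T (\<oplus>) compl (\<odot>) e"
abbreviation E where "E \<equiv> wa_E (\<oplus>) compl (\<odot>) e"

lemma E_distinct: "k \<noteq> l \<Longrightarrow> E k l = {s \<in> B. proj (3 - k - l) s \<preceq> e}"
  by (simp add: wa_E_def)

lemma Tstar_T_subset: "Tstar (T m) X \<subseteq> B"
  by (auto simp: Tstar_def wa_T_def)

lemma mem_Tstar_T_iff: "s \<in> Tstar (T m) X \<longleftrightarrow> s \<in> B \<and> (\<exists>t \<in> X \<inter> B. proj m s = proj m t)"
  by (auto simp: Tstar_def wa_T_def)

lemma B_eq_Tstar:
  assumes "k < 3" and "m < 3" and "k \<noteq> m"
  shows "B = Tstar (T m) (E k m \<inter> E m k)"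
proof -
  define j where "j = 3 - k - m"
  have "j < 3" "j \<noteq> m" and Ej: "E k m \<inter> E m k = {s \<in> B. proj j s \<preceq> e}"
    using assms by (auto simp: j_def E_distinct less_3_iff)
  have "s \<in> Tstar (T m) (E k m \<inter> E m k)" if s: "s \<in> B" for s
  proof -
    obtain t where t: "t \<in> B" "proj m t = proj m s" "proj j t \<preceq> e"
      using ex_ident_at_with_proj[OF \<open>m < 3\<close> \<open>j < 3\<close> \<open>j \<noteq> m\<close>[symmetric]]
        proj_atom[OF s] by blast
    then show ?thesis
      using s unfolding Ej mem_Tstar_T_iff by (auto intro!: bexI[of _ t])
  qed
  then show ?thesis
    using Tstar_T_subset by blast
qed

lemma E_eq_Tstar_distinct:
  assumes "k < 3" and "l < 3" and "m < 3" and "k \<noteq> m" and "m \<noteq> l" and "k \<noteq> l"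
  shows "E k l = Tstar (T m) (E k m \<inter> E m l)"
proof -
  have Ekl: "E k l = {s \<in> B. proj m s \<preceq> e}"
    and Ekml: "E k m \<inter> E m l = {s \<in> B. proj k s \<preceq> e \<and> proj l s \<preceq> e}"
    using assms by (auto simp: E_distinct less_3_iff)
  show ?thesis
  proof (intro equalityI subsetI)
    fix s
    assume "s \<in> E k l"
    then have s: "s \<in> B" "proj m s \<preceq> e"
      unfolding Ekl by simp_all
    let ?d = "proj m s"
    have "(?d, ?d, ?d) \<in> E k m \<inter> E m l"
      using s proj_atom ident_triple_mem_B unfolding Ekml by simp
    then show "s \<in> Tstar (T m) (E k m \<inter> E m l)"
      using s unfolding mem_Tstar_T_iff Ekml by (auto intro!: bexI[of _ "(?d, ?d, ?d)"])
  next
    fix s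
    assume "s \<in> Tstar (T m) (E k m \<inter> E m l)"
    then obtain t where "s \<in> B" "t \<in> B" "proj m s = proj m t" "proj k t \<preceq> e" "proj l t \<preceq> e"
      unfolding mem_Tstar_T_iff Ekml by blast
    moreover from this have "proj m t \<preceq> e"
      using ident_at_all_if_ident_at_two assms(1,2,6) by blast
    ultimately show "s \<in> E k l"
      unfolding Ekl by simp
  qed
qed

lemma E_eq_Tstar:
  assumes "k < 3" and "l < 3" and "m < 3" and "k \<noteq> m" and "m \<noteq> l"
  shows "E k l = Tstar (T m) (E k m \<inter> E m l)"
proof (cases "k = l")
  case True
  then show ?thesis
    using B_eq_Tstar assms by (simp add: wa_E_def)
next
  case False
  then show ?thesis
    using E_eq_Tstar_distinct assms by blast
qed

lemma T_inter_E_subset_Id: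
  assumes "k < 3" and "l < 3" and "k \<noteq> l"
  shows "T k \<inter> (E k l \<times> E k l) \<subseteq> Id"
proof -
  have "3 - k - l < 3" and "k \<noteq> 3 - k - l"
    using assms by (auto simp: less_3_iff)
  then have "inj_on (proj k) (E k l)"
    using inj_on_proj_ident_at \<open>k < 3\<close> E_distinct[OF \<open>k \<noteq> l\<close>] by simp
  then show ?thesis
    by (auto simp: wa_T_def inj_on_def)
qed

theorem suitable_B_T_E: "suitable 3 B T E"
  unfolding suitable_def
proof (intro conjI allI impI)
  fix k l m :: nat
  show "T k \<subseteq> B \<times> B" and "E k l \<subseteq> B" and "E k k = B"
    by (auto simp: wa_T_def wa_E_def)
  show "equiv B (T k)"
    by (auto simp: equiv_def refl_on_def sym_def trans_def wa_T_def)
  show "E k l = Tstar (T m) (E k m \<inter> E m l)" if "k < 3" "l < 3" "m < 3" "k \<noteq> m \<and> m \<noteq> l"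
    using that E_eq_Tstar by blast
  show "T k \<inter> (E k l \<times> E k l) \<subseteq> Id" if "k < 3" "l < 3" "k \<noteq> l"
    using that T_inter_E_subset_Id by blast
qed simp

end

lemma WA_imp_wa_algebra: "WA p c r v e \<Longrightarrow> wa_algebra p c r v e"
  unfolding WA_def wa_algebra_def huntington_algebra_def wa_algebra_axioms_def by blast

theorem lemma4:
  fixes p :: "'a \<Rightarrow> 'a \<Rightarrow> 'a" and c :: "'a \<Rightarrow> 'a" and r :: "'a \<Rightarrow> 'a \<Rightarrow> 'a"
    and v :: "'a \<Rightarrow> 'a" and e :: 'a
  assumes "WA p c r v e" and "wa_atomic p c e"
  shows "suitable 3 (wa_B p c r e) (wa_T p c r e) (wa_E p c r e)"
proof -
  interpret atomic_wa_algebra p c r v e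
    using assms WA_imp_wa_algebra by (simp add: atomic_wa_algebra_def atomic_wa_algebra_axioms_def)
  show ?thesis
    by (rule suitable_B_T_E)
qed

end
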